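(* Let $\Phi:\mathbb{R}^n\to\mathbb{R}$ be convex, of class $C^2$, bounded from below, with Hessian Lipschitz continuous on bounded sets, and let $\alpha,\beta>0$. Consider \[ \ddot x(t)+\alpha\dot x(t)+\beta\nabla^2\Phi(x(t))\dot x(t)+\nabla\Phi(x(t))=0 . \] Let $x(\cdot)$ be a solution on $[0,\infty)$ such that $(x(t),\dot x(t))$ is bounded. Then $\dot x(t)\to0$, $\nabla\Phi(x(t))\to0$, for every $z\in\operatorname{Argmin}\Phi$ the limit $\lim_{t\to\infty}\|x(t)-z\|$ exists, and $x(t)$ converges as $t\to\infty$ to a single point $x^\ast\in\operatorname{Argmin}\Phi$.
   Context: $\operatorname{Argmin}\Phi$ denotes the set of global minimizers of $\Phi$. *)

theory Defs
  imports "HOL-Analysis.Analysis"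
begin

definition Argmin :: "('a \<Rightarrow> real) \<Rightarrow> 'a set" where
  "Argmin \<Phi> = {z. \<forall>y. \<Phi> z \<le> \<Phi> y}"

end

theory Submission
  imports Defs
begin

(*
  With u = x' + \<beta> \<nabla>\<Phi>(x) the equation becomes the Hessian-free system u' = - \<alpha> x' - \<nabla>\<Phi>(x).
  The energy E = (1 + \<alpha>\<beta>) \<Phi>(x) + |u|^2/2 then satisfies E' = - \<alpha> |x'|^2 - \<beta> |\<nabla>\<Phi>(x)|^2, so E
  converges; as |x'|^2 and |\<nabla>\<Phi>(x)|^2 have bounded derivatives along a bounded trajectory,
  Barbalat's lemma gives x' \<rightarrow> 0 and \<nabla>\<Phi>(x) \<rightarrow> 0.
  For a minimizer z, convexity makes (x - z) \<bullet> u + \<alpha>/2 |x - z|^2 - \<beta> \<Phi>(x) + E/\<alpha> nonincreasing;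
  being bounded below it converges, and together with E this shows that h = |x - z|^2/2
  satisfies h' + \<alpha> h \<rightarrow> const, whence h converges (L'Hopital applied to h e^(\<alpha>t) / e^(\<alpha>t)).
  Finally, a cluster point of x is a critical point, hence a minimizer, and since the distance
  to it converges and tends to 0 along a subsequence, x converges to it (Opial's argument).
*)

lemma DERIV_nonpos_bdd_below_imp_convergent:
  fixes f f' :: "real \<Rightarrow> real"
  assumes f': "\<And>t. t > 0 \<Longrightarrow> (f has_real_derivative f' t) (at t)"
    and nonpos: "\<And>t. t > 0 \<Longrightarrow> f' t \<le> 0"
    and lower: "\<And>t. t > 0 \<Longrightarrow> B \<le> f t"
  shows "\<exists>L. (f \<longlongrightarrow> L) at_top"
proof -
  define L where "L = Inf (f ` {0<..})"
  have bdd: "bdd_below (f ` {0<..})"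
    using lower by (auto intro!: bdd_belowI)
  have antimono: "f t \<le> f s" if "0 < s" "s \<le> t" for s t
    using that f' nonpos
    by (intro DERIV_nonpos_imp_nonincreasing[of s t f]) (meson less_le_trans)+
  have "(f \<longlongrightarrow> L) at_top"
  proof (rule order_tendstoI)
    fix y assume "y < L"
    have "y < f t" if "t > 0" for t
      using \<open>y < L\<close> cInf_lower[OF _ bdd, of "f t"] that unfolding L_def by force
    then show "\<forall>\<^sub>F t in at_top. y < f t"
      by (auto intro: eventually_mono[OF eventually_gt_at_top[of 0]])
  next
    fix y assume "L < y"
    then obtain s where "s > 0" "f s < y"
      using cInf_lessD[of "f ` {0<..}" y] unfolding L_def by force
    then show "\<forall>\<^sub>F t in at_top. f t < y"
      by (intro eventually_mono[OF eventually_ge_at_top[of s]]) (meson antimono le_less_trans)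
  qed
  then show ?thesis by blast
qed

lemma tendsto_of_DERIV_add_mult_tendsto:
  fixes h h' :: "real \<Rightarrow> real"
  assumes h': "\<And>t. t > 0 \<Longrightarrow> (h has_real_derivative h' t) (at t)"
    and lim: "((\<lambda>t. h' t + a * h t) \<longlongrightarrow> K) at_top"
    and a: "a > 0"
  shows "(h \<longlongrightarrow> K / a) at_top"
proof -
  have "((\<lambda>t. h t * exp (a * t) / exp (a * t)) \<longlongrightarrow> K / a) at_top"
  proof (rule lhospital_at_top_at_top)
    show "filterlim (\<lambda>t. exp (a * t)) at_top at_top"
      using a by real_asymp
    show "\<forall>\<^sub>F t in at_top. a * exp (a * t) \<noteq> 0"
      using a by simp
    show "\<forall>\<^sub>F t in at_top. ((\<lambda>t. h t * exp (a * t)) has_real_derivative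
        (h' t + a * h t) * exp (a * t)) (at t)"
      using eventually_gt_at_top[of 0]
      by eventually_elim (auto intro!: derivative_eq_intros h' simp: algebra_simps)
    show "\<forall>\<^sub>F t in at_top. ((\<lambda>t. exp (a * t)) has_real_derivative a * exp (a * t)) (at t)"
      by (intro always_eventually allI) (auto intro!: derivative_eq_intros)
    show "((\<lambda>t. (h' t + a * h t) * exp (a * t) / (a * exp (a * t))) \<longlongrightarrow> K / a) at_top"
      using tendsto_divide[OF lim tendsto_const[of a]] a by simp
  qed
  then show ?thesis by simp
qed

lemma Barbalat_tendsto_0:
  fixes W W' g g' :: "real \<Rightarrow> real"
  assumes W': "\<And>t. t > 0 \<Longrightarrow> (W has_real_derivative W' t) (at t)"
    and dissipation: "\<And>t. t > 0 \<Longrightarrow> W' t \<le> - g t"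
    and W_lim: "(W \<longlongrightarrow> L) at_top"
    and g_nonneg: "\<And>t. t > 0 \<Longrightarrow> 0 \<le> g t"
    and g': "\<And>t. t > 0 \<Longrightarrow> (g has_real_derivative g' t) (at t)"
    and g'_bound: "\<And>t. t > 0 \<Longrightarrow> \<bar>g' t\<bar> \<le> M"
  shows "(g \<longlongrightarrow> 0) at_top"
proof (rule tendstoI)
  fix e :: real assume "e > 0"
  define M' where "M' = max M 1"
  define \<delta> where "\<delta> = e / (2 * M')"
  have "M' > 0" "\<delta> > 0" and M'_\<delta>: "M' * \<delta> = e / 2"
    using \<open>e > 0\<close> by (auto simp: M'_def \<delta>_def)
  have lipschitz: "\<bar>g s - g t\<bar> \<le> M' * \<bar>s - t\<bar>" if "s > 0" "t > 0" for s t
  proof -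
    have "norm (g s - g t) \<le> M' * norm (s - t)"
      using that g' g'_bound unfolding M'_def
      by (intro field_differentiable_bound[of "{0<..}" g g'])
         (auto intro: has_field_derivative_at_within le_max_iff_disj[THEN iffD2])
    then show ?thesis by simp
  qed
  obtain T where T: "\<And>s. s \<ge> T \<Longrightarrow> \<bar>W s - L\<bar> < e * \<delta> / 4"
    using tendstoD[OF W_lim, of "e * \<delta> / 4"] \<open>e > 0\<close> \<open>\<delta> > 0\<close>
    unfolding eventually_at_top_linorder dist_real_def by auto
  have "g t < e" if t: "t \<ge> max T 1" for t
  proof (rule ccontr)
    assume "\<not> g t < e"
    have g_large: "e / 2 \<le> g s" if "t \<le> s" "s \<le> t + \<delta>" for s
    proof -
      have "M' * \<bar>s - t\<bar> \<le> M' * \<delta>"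
        using that \<open>M' > 0\<close> by (intro mult_left_mono) auto
      then show ?thesis
        using lipschitz[of s t] that t \<open>\<not> g t < e\<close> M'_\<delta> by auto
    qed
    obtain \<xi> where \<xi>: "t < \<xi>" "\<xi> < t + \<delta>" "W (t + \<delta>) - W t = \<delta> * W' \<xi>"
      using MVT2[of t "t + \<delta>" W W'] W' t \<open>\<delta> > 0\<close> by force
    have "W' \<xi> \<le> - (e / 2)"
      using dissipation[of \<xi>] g_large[of \<xi>] \<xi> t by auto
    then have "W (t + \<delta>) - W t \<le> - (e * \<delta> / 2)"
      using \<xi>(3) mult_left_mono[of "W' \<xi>" "- (e / 2)" \<delta>] \<open>\<delta> > 0\<close>
      by (simp add: mult.commute)
    moreover have "\<bar>W (t + \<delta>) - L\<bar> < e * \<delta> / 4" "\<bar>W t - L\<bar> < e * \<delta> / 4"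
      using T t \<open>\<delta> > 0\<close> by auto
    ultimately show False by linarith
  qed
  then show "\<forall>\<^sub>F t in at_top. dist (g t) 0 < e"
    using g_nonneg unfolding eventually_at_top_linorder by (intro exI[of _ "max T 1"]) auto
qed

lemma convex_on_above_derivative:
  fixes f :: "'a::real_normed_vector \<Rightarrow> real"
  assumes convex: "convex_on UNIV f" and f': "(f has_derivative f') (at y)"
  shows "f y + f' (w - y) \<le> f w"
proof -
  define g where "g s = f (y + s *\<^sub>R (w - y))" for s :: real
  have "convex_on UNIV g"
  proof (rule convex_onI)
    fix t a b :: real
    have "y + ((1 - t) * a + t * b) *\<^sub>R (w - y)
        = (1 - t) *\<^sub>R (y + a *\<^sub>R (w - y)) + t *\<^sub>R (y + b *\<^sub>R (w - y))"
      by (simp add: algebra_simps)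
    moreover assume "0 < t" "t < 1"
    ultimately show "g ((1 - t) *\<^sub>R a + t *\<^sub>R b) \<le> (1 - t) * g a + t * g b"
      unfolding g_def using convex_onD[OF convex, of t] by simp
  qed simp
  moreover have "(g has_real_derivative f' (w - y)) (at 0)"
  proof -
    have "((\<lambda>s. y + s *\<^sub>R (w - y)) has_derivative (\<lambda>s. s *\<^sub>R (w - y))) (at 0)"
      by (auto intro!: derivative_eq_intros)
    moreover have "(f has_derivative f') (at (y + 0 *\<^sub>R (w - y)))"
      using f' by simp
    ultimately have "(g has_derivative (\<lambda>s. f' (s *\<^sub>R (w - y)))) (at 0)"
      unfolding g_def by (rule has_derivative_compose)
    then show ?thesis
      unfolding has_field_derivative_def
      by (rule has_derivative_eq_rhs)
         (simp add: linear_cmul[OF has_derivative_linear[OF f']] fun_eq_iff mult.commute)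
  qed
  ultimately have "f' (w - y) * (1 - 0) \<le> g 1 - g 0"
    by (intro convex_on_imp_above_tangent[of UNIV]) auto
  then show ?thesis by (simp add: g_def)
qed

lemma has_real_derivative_inner:
  assumes "(f has_vector_derivative f') (at t within S)" "(g has_vector_derivative g') (at t within S)"
  shows "((\<lambda>s. f s \<bullet> g s) has_real_derivative f t \<bullet> g' + f' \<bullet> g t) (at t within S)"
  using bounded_bilinear.has_vector_derivative[OF bounded_bilinear_inner assms]
  unfolding has_real_derivative_iff_has_vector_derivative .

lemma has_real_derivative_norm_power2:
  assumes "(f has_vector_derivative f') (at t within S)"
  shows "((\<lambda>s. (norm (f s))\<^sup>2) has_real_derivative 2 * (f t \<bullet> f')) (at t within S)"
  using has_real_derivative_inner[OF assms assms]
  by (simp add: power2_norm_eq_inner inner_commute)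

lemma norm_power2_tendsto_0_imp_tendsto_0:
  fixes f :: "'b \<Rightarrow> 'a::real_normed_vector"
  assumes "((\<lambda>t. (norm (f t))\<^sup>2) \<longlongrightarrow> 0) F"
  shows "(f \<longlongrightarrow> 0) F"
  using tendsto_real_sqrt[OF assms] by (simp add: tendsto_norm_zero_iff)

lemma tendsto_of_subsequence_and_dist_tendsto:
  fixes x :: "real \<Rightarrow> 'a::metric_space"
  assumes s: "filterlim s at_top sequentially" and sub: "((\<lambda>n. x (s n)) \<longlongrightarrow> l) sequentially"
    and dist: "((\<lambda>t. dist (x t) l) \<longlongrightarrow> d) at_top"
  shows "(x \<longlongrightarrow> l) at_top"
proof -
  have "((\<lambda>n. dist (x (s n)) l) \<longlongrightarrow> d) sequentially"
    using filterlim_compose[OF dist s] .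
  moreover have "((\<lambda>n. dist (x (s n)) l) \<longlongrightarrow> 0) sequentially"
    using tendsto_dist[OF sub tendsto_const[of l]] by simp
  ultimately have "d = 0" by (rule LIMSEQ_unique)
  then show ?thesis
    using dist by (subst tendsto_dist_iff) simp
qed

lemma bounded_imp_convergent_subsequence_at_top:
  fixes x :: "real \<Rightarrow> 'a::heine_borel"
  assumes "bounded (x ` {0..})"
  obtains s l where "filterlim s at_top sequentially" "((\<lambda>n. x (s n)) \<longlongrightarrow> l) sequentially"
proof -
  have "bounded (range (\<lambda>n::nat. x (real n)))"
    by (rule bounded_subset[OF assms]) auto
  then obtain l r where r: "strict_mono r" and lim: "((\<lambda>n. x (real (r n))) \<longlongrightarrow> l) sequentially"
    using bounded_imp_convergent_subsequence unfolding comp_def by blast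
  have "filterlim (\<lambda>n. real (r n)) at_top sequentially"
    using filterlim_compose[OF filterlim_real_sequentially filterlim_subseq[OF r]] .
  from this lim show ?thesis by (rule that)
qed

locale hessian_damped_trajectory =
  fixes \<Phi> :: "'n::euclidean_space \<Rightarrow> real"
    and gradPhi :: "'n \<Rightarrow> 'n"
    and hessPhi :: "'n \<Rightarrow> ('n \<Rightarrow>\<^sub>L 'n)"
    and \<alpha> \<beta> :: real
    and x v :: "real \<Rightarrow> 'n"
  assumes convex: "convex_on UNIV \<Phi>"
    and grad: "\<And>y. (\<Phi> has_derivative (\<lambda>h. gradPhi y \<bullet> h)) (at y)"
    and hess: "\<And>y. (gradPhi has_derivative blinfun_apply (hessPhi y)) (at y)"
    and hess_cont: "continuous_on UNIV hessPhi"
    and Phi_bdd_below: "bdd_below (range \<Phi>)"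
    and alpha: "\<alpha> > 0" and beta: "\<beta> > 0"
    and x': "\<And>t. t > 0 \<Longrightarrow> (x has_vector_derivative v t) (at t)"
    and v': "\<And>t. t > 0 \<Longrightarrow> (v has_vector_derivative
               - (\<alpha> *\<^sub>R v t) - \<beta> *\<^sub>R hessPhi (x t) (v t) - gradPhi (x t)) (at t)"
    and bounded_x: "bounded (x ` {0..})"
    and bounded_v: "bounded (v ` {0..})"
begin

lemma grad_along_deriv:
  "t > 0 \<Longrightarrow> ((\<lambda>t. gradPhi (x t)) has_vector_derivative hessPhi (x t) (v t)) (at t)"
  using has_derivative_compose[OF x'[unfolded has_vector_derivative_def] hess]
  by (simp add: has_vector_derivative_def blinfun.scaleR_right)

lemma Phi_along_deriv:
  assumes "t > 0"
  shows "((\<lambda>t. \<Phi> (x t)) has_real_derivative gradPhi (x t) \<bullet> v t) (at t)"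
  using has_derivative_compose[OF x'[OF assms, unfolded has_vector_derivative_def] grad]
  by (rule has_derivative_imp_has_field_derivative) (simp add: algebra_simps)

lemma critical_point_in_Argmin: "gradPhi y = 0 \<Longrightarrow> y \<in> Argmin \<Phi>"
  using convex_on_above_derivative[OF convex grad, of y] by (simp add: Argmin_def)

lemma bounded_along:
  assumes "continuous_on UNIV f"
  shows "bounded ((\<lambda>t. f (x t)) ` {0..})"
proof -
  have "compact (f ` closure (x ` {0..}))"
    using bounded_x by (intro compact_continuous_image continuous_on_subset[OF assms]) auto
  moreover have "(\<lambda>t. f (x t)) ` {0..} \<subseteq> f ` closure (x ` {0..})"
    using closure_subset by fastforce
  ultimately show ?thesis
    using bounded_subset compact_imp_bounded by blast
qed

lemma trajectory_bounds:
  obtains B where "\<And>t. t \<ge> 0 \<Longrightarrow> norm (x t) \<le> B" "\<And>t. t \<ge> 0 \<Longrightarrow> norm (v t) \<le> B"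
    "\<And>t. t \<ge> 0 \<Longrightarrow> norm (gradPhi (x t)) \<le> B" "\<And>t. t \<ge> 0 \<Longrightarrow> norm (hessPhi (x t)) \<le> B"
    "\<And>t. t \<ge> 0 \<Longrightarrow> \<bar>\<Phi> (x t)\<bar> \<le> B"
proof -
  have "continuous_on UNIV gradPhi" "continuous_on UNIV \<Phi>"
    using hess grad by (auto intro: has_derivative_continuous continuous_at_imp_continuous_on)
  then obtain B1 B2 B3 B4 B5 where
    "\<And>t. t \<ge> 0 \<Longrightarrow> norm (x t) \<le> B1" "\<And>t. t \<ge> 0 \<Longrightarrow> norm (v t) \<le> B2"
    "\<And>t. t \<ge> 0 \<Longrightarrow> norm (gradPhi (x t)) \<le> B3" "\<And>t. t \<ge> 0 \<Longrightarrow> norm (hessPhi (x t)) \<le> B4"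
    "\<And>t. t \<ge> 0 \<Longrightarrow> norm (\<Phi> (x t)) \<le> B5"
    using bounded_x bounded_v bounded_along[of gradPhi] bounded_along[OF hess_cont]
      bounded_along[of \<Phi>]
    unfolding bounded_iff by (metis atLeast_iff imageI)
  then show ?thesis
    by (intro that[of "max B1 (max B2 (max B3 (max B4 B5)))"]) (force intro: le_max_iff_disj[THEN iffD2])+
qed

lemma bounded_acceleration:
  obtains M where
    "\<And>t. t \<ge> 0 \<Longrightarrow> norm (- (\<alpha> *\<^sub>R v t) - \<beta> *\<^sub>R hessPhi (x t) (v t) - gradPhi (x t)) \<le> M"
proof -
  obtain B where B: "\<And>t. t \<ge> 0 \<Longrightarrow> norm (v t) \<le> B" "\<And>t. t \<ge> 0 \<Longrightarrow> norm (gradPhi (x t)) \<le> B"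
    "\<And>t. t \<ge> 0 \<Longrightarrow> norm (hessPhi (x t)) \<le> B"
    by (metis trajectory_bounds)
  have "norm (- (\<alpha> *\<^sub>R v t) - \<beta> *\<^sub>R hessPhi (x t) (v t) - gradPhi (x t)) \<le> \<alpha> * B + \<beta> * (B * B) + B"
    if "t \<ge> 0" for t
  proof -
    have "norm (hessPhi (x t) (v t)) \<le> B * B"
      using norm_blinfun[of "hessPhi (x t)" "v t"] B[OF that]
      by (meson mult_mono norm_ge_zero order_trans)
    then have "norm (\<beta> *\<^sub>R hessPhi (x t) (v t)) \<le> \<beta> * (B * B)"
      using beta by (simp add: mult_left_mono)
    moreover have "norm (\<alpha> *\<^sub>R v t) \<le> \<alpha> * B"
      using B(1)[OF that] alpha by (simp add: mult_left_mono)
    moreover have "norm (- p - q - r) \<le> norm p + norm q + norm r" for p q r :: 'n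
    proof -
      have "norm (- p - q - r) = norm (p + q + r)"
        by (metis minus_diff_eq norm_minus_cancel diff_minus_eq_add add.commute)
      also have "\<dots> \<le> norm p + norm q + norm r"
        by (rule order_trans[OF norm_triangle_ineq add_right_mono[OF norm_triangle_ineq]])
      finally show ?thesis .
    qed
    ultimately show ?thesis
      using B(2)[OF that] by (smt (verit))
  qed
  then show ?thesis by (rule that)
qed

definition u :: "real \<Rightarrow> 'n" where
  "u t = v t + \<beta> *\<^sub>R gradPhi (x t)"

lemma u_deriv:
  assumes "t > 0"
  shows "(u has_vector_derivative - (\<alpha> *\<^sub>R v t) - gradPhi (x t)) (at t)"
proof -
  have "(u has_vector_derivative (- (\<alpha> *\<^sub>R v t) - \<beta> *\<^sub>R hessPhi (x t) (v t) - gradPhi (x t))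
      + \<beta> *\<^sub>R hessPhi (x t) (v t)) (at t)"
    unfolding u_def[abs_def]
    by (intro has_vector_derivative_add v' assms
        bounded_linear.has_vector_derivative[OF bounded_linear_scaleR_right] grad_along_deriv)
  then show ?thesis by simp
qed

definition energy :: "real \<Rightarrow> real" where
  "energy t = (1 + \<alpha> * \<beta>) * \<Phi> (x t) + (norm (u t))\<^sup>2 / 2"

lemma energy_deriv:
  assumes "t > 0"
  shows "(energy has_real_derivative - \<alpha> * (norm (v t))\<^sup>2 - \<beta> * (norm (gradPhi (x t)))\<^sup>2) (at t)"
proof -
  have "(energy has_real_derivative (1 + \<alpha> * \<beta>) * (gradPhi (x t) \<bullet> v t)
      + 2 * (u t \<bullet> (- (\<alpha> *\<^sub>R v t) - gradPhi (x t))) / 2) (at t)"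
    unfolding energy_def[abs_def]
    by (intro DERIV_add DERIV_cmult DERIV_cdivide Phi_along_deriv has_real_derivative_norm_power2
        u_deriv assms)
  moreover have "(1 + \<alpha> * \<beta>) * (gradPhi (x t) \<bullet> v t) + 2 * (u t \<bullet> (- (\<alpha> *\<^sub>R v t) - gradPhi (x t))) / 2
      = - \<alpha> * (norm (v t))\<^sup>2 - \<beta> * (norm (gradPhi (x t)))\<^sup>2"
    by (simp add: u_def power2_norm_eq_inner inner_add_left inner_diff_right
        inner_commute[of "gradPhi (x t)" "v t"] field_simps)
  ultimately show ?thesis by simp
qed

lemma energy_lower_bound: "(1 + \<alpha> * \<beta>) * Inf (range \<Phi>) \<le> energy t"
proof -
  have "(1 + \<alpha> * \<beta>) * Inf (range \<Phi>) \<le> (1 + \<alpha> * \<beta>) * \<Phi> (x t)"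
    using cInf_lower[OF _ Phi_bdd_below] alpha beta by (intro mult_left_mono) auto
  then show ?thesis unfolding energy_def by (intro add_increasing2) auto
qed

lemma energy_convergent:
  obtains L where "(energy \<longlongrightarrow> L) at_top"
proof -
  have "- \<alpha> * (norm (v t))\<^sup>2 - \<beta> * (norm (gradPhi (x t)))\<^sup>2 \<le> 0" for t
  proof -
    have "0 \<le> \<alpha> * (norm (v t))\<^sup>2" "0 \<le> \<beta> * (norm (gradPhi (x t)))\<^sup>2"
      using alpha beta by simp_all
    then show ?thesis by linarith
  qed
  then show ?thesis
    using DERIV_nonpos_bdd_below_imp_convergent[OF energy_deriv _ energy_lower_bound] that by blast
qed

lemma dissipated_tendsto_0:
  assumes "c > 0"
    and g_nonneg: "\<And>t. 0 \<le> g t"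
    and dissipated: "\<And>t. c * g t \<le> \<alpha> * (norm (v t))\<^sup>2 + \<beta> * (norm (gradPhi (x t)))\<^sup>2"
    and g': "\<And>t. t > 0 \<Longrightarrow> (g has_real_derivative g' t) (at t)"
    and g'_bound: "\<And>t. t > 0 \<Longrightarrow> \<bar>g' t\<bar> \<le> M"
  shows "(g \<longlongrightarrow> 0) at_top"
proof -
  obtain L where "(energy \<longlongrightarrow> L) at_top" by (rule energy_convergent)
  then have lim: "((\<lambda>t. energy t / c) \<longlongrightarrow> L / c) at_top"
    by (rule tendsto_divide) (use \<open>c > 0\<close> in auto)
  have deriv: "((\<lambda>t. energy t / c) has_real_derivative
      (- \<alpha> * (norm (v t))\<^sup>2 - \<beta> * (norm (gradPhi (x t)))\<^sup>2) / c) (at t)" if "t > 0" for t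
    using energy_deriv[OF that] by (rule DERIV_cdivide)
  have dissipation: "(- \<alpha> * (norm (v t))\<^sup>2 - \<beta> * (norm (gradPhi (x t)))\<^sup>2) / c \<le> - g t" for t
    using dissipated[of t] \<open>c > 0\<close> by (simp add: field_simps)
  show ?thesis
    by (rule Barbalat_tendsto_0[OF deriv dissipation lim _ g' g'_bound]) (auto intro: g_nonneg)
qed

lemma velocity_tendsto_0: "(v \<longlongrightarrow> 0) at_top"
proof -
  obtain B where B: "\<And>t. t \<ge> 0 \<Longrightarrow> norm (v t) \<le> B"
    by (metis trajectory_bounds)
  obtain M where M:
    "\<And>t. t \<ge> 0 \<Longrightarrow> norm (- (\<alpha> *\<^sub>R v t) - \<beta> *\<^sub>R hessPhi (x t) (v t) - gradPhi (x t)) \<le> M"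
    using bounded_acceleration by metis
  have bound: "\<bar>2 * (v t \<bullet> (- (\<alpha> *\<^sub>R v t) - \<beta> *\<^sub>R hessPhi (x t) (v t) - gradPhi (x t)))\<bar>
      \<le> 2 * (B * M)" if "t > 0" for t
    using Cauchy_Schwarz_ineq2[of "v t"] B[of t] M[of t] that
    by (smt (verit, best) mult_mono norm_ge_zero)
  have "((\<lambda>t. (norm (v t))\<^sup>2) \<longlongrightarrow> 0) at_top"
    using beta
    by (intro dissipated_tendsto_0[OF alpha _ _ has_real_derivative_norm_power2[OF v'] bound]) auto
  then show ?thesis by (rule norm_power2_tendsto_0_imp_tendsto_0)
qed

lemma grad_tendsto_0: "((\<lambda>t. gradPhi (x t)) \<longlongrightarrow> 0) at_top"
proof -
  obtain B where B: "\<And>t. t \<ge> 0 \<Longrightarrow> norm (v t) \<le> B" "\<And>t. t \<ge> 0 \<Longrightarrow> norm (gradPhi (x t)) \<le> B"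
    "\<And>t. t \<ge> 0 \<Longrightarrow> norm (hessPhi (x t)) \<le> B"
    by (metis trajectory_bounds)
  have bound: "\<bar>2 * (gradPhi (x t) \<bullet> hessPhi (x t) (v t))\<bar> \<le> 2 * (B * (B * B))" if "t > 0" for t
  proof -
    have "norm (hessPhi (x t) (v t)) \<le> B * B"
      using norm_blinfun[of "hessPhi (x t)" "v t"] B[of t] that
      by (meson less_imp_le mult_mono norm_ge_zero order_trans)
    then show ?thesis
      using Cauchy_Schwarz_ineq2[of "gradPhi (x t)"] B(2)[of t] that
      by (smt (verit, best) mult_mono norm_ge_zero)
  qed
  have "((\<lambda>t. (norm (gradPhi (x t)))\<^sup>2) \<longlongrightarrow> 0) at_top"
    using alpha
    by (intro dissipated_tendsto_0[OF beta _ _ has_real_derivative_norm_power2[OF grad_along_deriv]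
          bound]) auto
  then show ?thesis by (rule norm_power2_tendsto_0_imp_tendsto_0)
qed

lemma Phi_gap_le_grad_inner:
  assumes "z \<in> Argmin \<Phi>"
  shows "0 \<le> \<Phi> (x t) - \<Phi> z" and "\<Phi> (x t) - \<Phi> z \<le> (x t - z) \<bullet> gradPhi (x t)"
  using assms convex_on_above_derivative[OF convex grad, of "x t" z]
  by (auto simp: Argmin_def inner_diff_left inner_diff_right inner_commute)

lemma grad_inner_tendsto_0: "((\<lambda>t. (x t - z) \<bullet> gradPhi (x t)) \<longlongrightarrow> 0) at_top"
proof -
  obtain B where B: "\<And>t. t \<ge> 0 \<Longrightarrow> norm (x t) \<le> B"
    by (metis trajectory_bounds)
  have "\<forall>\<^sub>F t in at_top. norm (x t - z) \<le> B + norm z"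
    using B norm_triangle_ineq4[of _ z]
    by (intro eventually_mono[OF eventually_ge_at_top[of 0]]) (smt (verit))
  then have "Bfun (\<lambda>t. x t - z) at_top" by (rule BfunI)
  moreover have "Zfun (\<lambda>t. gradPhi (x t)) at_top"
    using grad_tendsto_0 by (simp add: tendsto_Zfun_iff)
  ultimately show ?thesis
    using bounded_bilinear.Bfun_prod_Zfun[OF bounded_bilinear_inner] by (simp add: tendsto_Zfun_iff)
qed

lemma Phi_along_tendsto_min:
  assumes "z \<in> Argmin \<Phi>"
  shows "((\<lambda>t. \<Phi> (x t)) \<longlongrightarrow> \<Phi> z) at_top"
proof (rule tendsto_sandwich)
  show "\<forall>\<^sub>F t in at_top. \<Phi> z \<le> \<Phi> (x t)"
    using Phi_gap_le_grad_inner(1)[OF assms] by (simp add: always_eventually)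
  show "\<forall>\<^sub>F t in at_top. \<Phi> (x t) \<le> \<Phi> z + (x t - z) \<bullet> gradPhi (x t)"
    using Phi_gap_le_grad_inner(2)[OF assms] by (simp add: always_eventually add.commute diff_le_eq)
  show "((\<lambda>t. \<Phi> z + (x t - z) \<bullet> gradPhi (x t)) \<longlongrightarrow> \<Phi> z) at_top"
    using tendsto_add[OF tendsto_const grad_inner_tendsto_0] by simp
qed (rule tendsto_const)

definition anchored_energy :: "'n \<Rightarrow> real \<Rightarrow> real" where
  "anchored_energy z t =
     (x t - z) \<bullet> u t + \<alpha> / 2 * (norm (x t - z))\<^sup>2 - \<beta> * \<Phi> (x t) + energy t / \<alpha>"

lemma anchored_energy_deriv:
  assumes "t > 0"
  shows "(anchored_energy z has_real_derivative
    - ((x t - z) \<bullet> gradPhi (x t)) - \<beta> / \<alpha> * (norm (gradPhi (x t)))\<^sup>2) (at t)"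
proof -
  have xz': "((\<lambda>t. x t - z) has_vector_derivative v t) (at t)"
    using has_vector_derivative_diff[OF x'[OF assms] has_vector_derivative_const[of z]] by simp
  have "(anchored_energy z has_real_derivative
      (x t - z) \<bullet> (- (\<alpha> *\<^sub>R v t) - gradPhi (x t)) + v t \<bullet> u t + \<alpha> / 2 * (2 * ((x t - z) \<bullet> v t))
      - \<beta> * (gradPhi (x t) \<bullet> v t)
      + (- \<alpha> * (norm (v t))\<^sup>2 - \<beta> * (norm (gradPhi (x t)))\<^sup>2) / \<alpha>) (at t)"
    unfolding anchored_energy_def[abs_def]
    by (intro DERIV_add DERIV_diff DERIV_cmult DERIV_cdivide has_real_derivative_inner
        has_real_derivative_norm_power2 xz' u_deriv Phi_along_deriv energy_deriv assms)
  moreover have "(x t - z) \<bullet> (- (\<alpha> *\<^sub>R v t) - gradPhi (x t)) + v t \<bullet> u t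
      + \<alpha> / 2 * (2 * ((x t - z) \<bullet> v t)) - \<beta> * (gradPhi (x t) \<bullet> v t)
      + (- \<alpha> * (norm (v t))\<^sup>2 - \<beta> * (norm (gradPhi (x t)))\<^sup>2) / \<alpha>
    = - ((x t - z) \<bullet> gradPhi (x t)) - \<beta> / \<alpha> * (norm (gradPhi (x t)))\<^sup>2"
    using alpha
    by (simp add: u_def power2_norm_eq_inner inner_add_right inner_diff_right
        inner_commute[of "gradPhi (x t)" "v t"] field_simps)
  ultimately show ?thesis by simp
qed

lemma anchored_energy_convergent:
  assumes z: "z \<in> Argmin \<Phi>"
  obtains L where "(anchored_energy z \<longlongrightarrow> L) at_top"
proof -
  obtain B where B: "\<And>t. t \<ge> 0 \<Longrightarrow> norm (x t) \<le> B" "\<And>t. t \<ge> 0 \<Longrightarrow> norm (v t) \<le> B"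
    "\<And>t. t \<ge> 0 \<Longrightarrow> norm (gradPhi (x t)) \<le> B" "\<And>t. t \<ge> 0 \<Longrightarrow> \<bar>\<Phi> (x t)\<bar> \<le> B"
    by (metis trajectory_bounds)
  have lower: "- ((B + norm z) * (B + \<beta> * B)) - \<beta> * B + (1 + \<alpha> * \<beta>) * Inf (range \<Phi>) / \<alpha>
      \<le> anchored_energy z t" if "t > 0" for t
  proof -
    have "norm (\<beta> *\<^sub>R gradPhi (x t)) \<le> \<beta> * B"
      using B(3)[of t] that beta by (simp add: mult_left_mono)
    then have "norm (u t) \<le> B + \<beta> * B"
      using norm_triangle_ineq[of "v t" "\<beta> *\<^sub>R gradPhi (x t)"] B(2)[of t] that
      unfolding u_def by linarith
    moreover have "norm (x t - z) \<le> B + norm z"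
      using norm_triangle_ineq4[of "x t" z] B(1)[of t] that by linarith
    ultimately have "norm (x t - z) * norm (u t) \<le> (B + norm z) * (B + \<beta> * B)"
      by (meson mult_mono norm_ge_zero order_trans)
    then have "- ((B + norm z) * (B + \<beta> * B)) \<le> (x t - z) \<bullet> u t"
      using Cauchy_Schwarz_ineq2[of "x t - z" "u t"] by linarith
    moreover have "\<beta> * \<Phi> (x t) \<le> \<beta> * B"
      using B(4)[of t] that beta by (intro mult_left_mono) auto
    moreover have "(1 + \<alpha> * \<beta>) * Inf (range \<Phi>) / \<alpha> \<le> energy t / \<alpha>"
      using energy_lower_bound alpha by (intro divide_right_mono) auto
    moreover have "0 \<le> \<alpha> / 2 * (norm (x t - z))\<^sup>2"
      using alpha by simp
    ultimately show ?thesis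
      unfolding anchored_energy_def by linarith
  qed
  have "- ((x t - z) \<bullet> gradPhi (x t)) - \<beta> / \<alpha> * (norm (gradPhi (x t)))\<^sup>2 \<le> 0" for t
  proof -
    have "0 \<le> (x t - z) \<bullet> gradPhi (x t)"
      using Phi_gap_le_grad_inner[OF z, of t] by linarith
    moreover have "0 \<le> \<beta> / \<alpha> * (norm (gradPhi (x t)))\<^sup>2"
      using alpha beta by simp
    ultimately show ?thesis by linarith
  qed
  then show ?thesis
    using DERIV_nonpos_bdd_below_imp_convergent[OF anchored_energy_deriv _ lower] that by blast
qed

lemma dist_to_minimizer_convergent:
  assumes z: "z \<in> Argmin \<Phi>"
  obtains d where "((\<lambda>t. norm (x t - z)) \<longlongrightarrow> d) at_top"
proof -
  obtain L\<^sub>a where L\<^sub>a: "(anchored_energy z \<longlongrightarrow> L\<^sub>a) at_top"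
    using anchored_energy_convergent[OF z] .
  obtain L\<^sub>e where L\<^sub>e: "(energy \<longlongrightarrow> L\<^sub>e) at_top"
    by (rule energy_convergent)
  define h where "h t = (norm (x t - z))\<^sup>2 / 2" for t
  have h': "(h has_real_derivative (x t - z) \<bullet> v t) (at t)" if "t > 0" for t
    using has_real_derivative_norm_power2[OF has_vector_derivative_diff[OF x'[OF that]
        has_vector_derivative_const[of z]]]
    unfolding h_def[abs_def] by (auto dest: DERIV_cdivide[where c = 2])
  have "(x t - z) \<bullet> v t + \<alpha> * h t = anchored_energy z t - energy t / \<alpha>
      - \<beta> * ((x t - z) \<bullet> gradPhi (x t)) + \<beta> * \<Phi> (x t)" for t
    by (simp add: anchored_energy_def u_def h_def inner_add_right algebra_simps)
  moreover have "((\<lambda>t. anchored_energy z t - energy t / \<alpha>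
      - \<beta> * ((x t - z) \<bullet> gradPhi (x t)) + \<beta> * \<Phi> (x t))
      \<longlongrightarrow> L\<^sub>a - L\<^sub>e / \<alpha> - \<beta> * 0 + \<beta> * \<Phi> z) at_top"
    by (intro tendsto_intros L\<^sub>a L\<^sub>e grad_inner_tendsto_0 Phi_along_tendsto_min z) (use alpha in simp)
  ultimately have "(h \<longlongrightarrow> (L\<^sub>a - L\<^sub>e / \<alpha> + \<beta> * \<Phi> z) / \<alpha>) at_top"
    using alpha by (intro tendsto_of_DERIV_add_mult_tendsto[OF h']) simp_all
  then have "((\<lambda>t. sqrt (2 * h t)) \<longlongrightarrow> sqrt (2 * ((L\<^sub>a - L\<^sub>e / \<alpha> + \<beta> * \<Phi> z) / \<alpha>))) at_top"
    by (intro tendsto_intros)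
  moreover have "sqrt (2 * h t) = norm (x t - z)" for t
    by (simp add: h_def)
  ultimately show ?thesis
    using that by auto
qed

theorem tendsto_minimizer:
  obtains xstar where "xstar \<in> Argmin \<Phi>" "(x \<longlongrightarrow> xstar) at_top"
proof -
  obtain s l where s: "filterlim s at_top sequentially" and l: "((\<lambda>n. x (s n)) \<longlongrightarrow> l) sequentially"
    using bounded_imp_convergent_subsequence_at_top[OF bounded_x] .
  have "((\<lambda>n. gradPhi (x (s n))) \<longlongrightarrow> 0) sequentially"
    using filterlim_compose[OF grad_tendsto_0 s] .
  moreover have "((\<lambda>n. gradPhi (x (s n))) \<longlongrightarrow> gradPhi l) sequentially"
    using isCont_tendsto_compose[OF has_derivative_continuous[OF hess] l] .
  ultimately have "gradPhi l = 0"
    using LIMSEQ_unique by metis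
  then have l_min: "l \<in> Argmin \<Phi>"
    by (rule critical_point_in_Argmin)
  then obtain d where "((\<lambda>t. norm (x t - l)) \<longlongrightarrow> d) at_top"
    by (rule dist_to_minimizer_convergent)
  then have "((\<lambda>t. dist (x t) l) \<longlongrightarrow> d) at_top"
    by (simp add: dist_norm)
  then have "(x \<longlongrightarrow> l) at_top"
    by (rule tendsto_of_subsequence_and_dist_tendsto[OF s l])
  with l_min show ?thesis
    by (rule that)
qed

end

theorem mainTheorem12:
  fixes \<Phi> :: "'n::euclidean_space \<Rightarrow> real"
    and gradPhi :: "'n \<Rightarrow> 'n"
    and hessPhi :: "'n \<Rightarrow> ('n \<Rightarrow>\<^sub>L 'n)"
    and \<alpha> \<beta> :: real
    and x v :: "real \<Rightarrow> 'n"
  assumes convex: "convex_on UNIV \<Phi>"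
    and grad: "\<And>y. (\<Phi> has_derivative (\<lambda>h. gradPhi y \<bullet> h)) (at y)"
    and hess: "\<And>y. (gradPhi has_derivative blinfun_apply (hessPhi y)) (at y)"
    and hess_cont: "continuous_on UNIV hessPhi"
    and bdd_below: "bdd_below (range \<Phi>)"
    and hess_lip: "\<And>B. bounded B \<Longrightarrow>
          \<exists>L. \<forall>y\<in>B. \<forall>z\<in>B. norm (hessPhi y - hessPhi z) \<le> L * dist y z"
    and alpha: "\<alpha> > 0" and beta: "\<beta> > 0"
    and dx: "\<And>t. t \<ge> 0 \<Longrightarrow> (x has_vector_derivative v t) (at t within {0..})"
    and dv: "\<And>t. t \<ge> 0 \<Longrightarrow> (v has_vector_derivative
               (- (\<alpha> *\<^sub>R v t) - \<beta> *\<^sub>R hessPhi (x t) (v t) - gradPhi (x t))) (at t within {0..})"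
    and bounded: "bounded ((\<lambda>t. (x t, v t)) ` {0..})"
  shows "(v \<longlongrightarrow> 0) at_top
    \<and> ((\<lambda>t. gradPhi (x t)) \<longlongrightarrow> 0) at_top
    \<and> (\<forall>z\<in>Argmin \<Phi>. \<exists>l. ((\<lambda>t. norm (x t - z)) \<longlongrightarrow> l) at_top)
    \<and> (\<exists>xstar\<in>Argmin \<Phi>. (x \<longlongrightarrow> xstar) at_top)"
proof -
  have at_within_eq: "at t within {0..} = at t" if "t > 0" for t :: real
    using that by (intro at_within_interior) auto
  interpret hessian_damped_trajectory \<Phi> gradPhi hessPhi \<alpha> \<beta> x v
  proof unfold_locales
    show "(x has_vector_derivative v t) (at t)" if "t > 0" for t
      using dx[of t] at_within_eq[OF that] that by simp
    show "(v has_vector_derivative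
        - (\<alpha> *\<^sub>R v t) - \<beta> *\<^sub>R hessPhi (x t) (v t) - gradPhi (x t)) (at t)" if "t > 0" for t
      using dv[of t] at_within_eq[OF that] that by simp
    show "bounded (x ` {0..})"
      using bounded_fst[OF bounded] by (simp add: image_image)
    show "bounded (v ` {0..})"
      using bounded_snd[OF bounded] by (simp add: image_image)
  qed (fact convex grad hess hess_cont bdd_below alpha beta)+
  show ?thesis
  proof (intro conjI ballI)
    show "(v \<longlongrightarrow> 0) at_top"
      by (rule velocity_tendsto_0)
    show "((\<lambda>t. gradPhi (x t)) \<longlongrightarrow> 0) at_top"
      by (rule grad_tendsto_0)
    show "\<exists>l. ((\<lambda>t. norm (x t - z)) \<longlongrightarrow> l) at_top" if "z \<in> Argmin \<Phi>" for z
      using dist_to_minimizer_convergent[OF that] by blast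
    show "\<exists>xstar\<in>Argmin \<Phi>. (x \<longlongrightarrow> xstar) at_top"
      using tendsto_minimizer by blast
  qed
qed

end
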